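(* Let $n,m\ge 1$ and let $T$ be a geometric tree covering $V(n,m)=\{1,\dots,n\}\times\{1,\dots,m\}$. Then: (i) $T$ has at least $2\min(n,m)-2$ edges; (ii) if $n,m\le 2$, $T$ has at least $2\min(n,m)-1$ edges; (iii) if $n\ne m$, $T$ has at least $2\min(n,m)-1$ edges; (iv) if $n=m\ge 3$ and $T$ is noncrossing, $T$ has at least $2n-1$ edges.
   Context: A geometric tree is a finite abstract tree with at least one edge whose vertices are distinct points of the plane (arbitrary, not necessarily grid points) and whose edges are drawn as closed straight-line segments between their endpoints. It covers $P$ if every point of $P$ lies on the union of its edges. It is noncrossing if any two edges intersect only if they share an endpoint, and then only in that endpoint. *)

theory Defs
  imports "HOL-Analysis.Analysis"
begin

type_synonym point = "real \<times> real"

definition adj :: "'a set set \<Rightarrow> 'a \<Rightarrow> 'a \<Rightarrow> bool" where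
  "adj E u v \<longleftrightarrow> {u, v} \<in> E"

definition graph_connected :: "'a set \<Rightarrow> 'a set set \<Rightarrow> bool" where
  "graph_connected V E \<longleftrightarrow> (\<forall>u\<in>V. \<forall>v\<in>V. (u, v) \<in> {(x, y). adj E x y}\<^sup>*)"

text \<open>Acyclic: no edge lies on a cycle, i.e. removing any edge disconnects its endpoints.\<close>
definition graph_acyclic :: "'a set set \<Rightarrow> bool" where
  "graph_acyclic E \<longleftrightarrow> (\<forall>u v. {u, v} \<in> E \<longrightarrow> (u, v) \<notin> {(x, y). adj (E - {{u, v}}) x y}\<^sup>*)"

definition is_tree :: "'a set \<Rightarrow> 'a set set \<Rightarrow> bool" where
  "is_tree V E \<longleftrightarrow> finite V \<and> (\<forall>e\<in>E. \<exists>u v. u \<in> V \<and> v \<in> V \<and> u \<noteq> v \<and> e = {u, v})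
     \<and> graph_connected V E \<and> graph_acyclic E"

text \<open>A geometric tree: a finite tree with at least one edge whose vertices are distinct points
  of the plane (vertices are the points themselves); edges are drawn as closed segments.\<close>
definition geometric_tree :: "point set \<Rightarrow> point set set \<Rightarrow> bool" where
  "geometric_tree V E \<longleftrightarrow> is_tree V E \<and> E \<noteq> {}"

definition edge_seg :: "point set \<Rightarrow> point set" where
  "edge_seg e = (THE s. \<exists>u v. e = {u, v} \<and> s = closed_segment u v)"

definition covers :: "point set set \<Rightarrow> point set \<Rightarrow> bool" where
  "covers E P \<longleftrightarrow> P \<subseteq> (\<Union>e\<in>E. edge_seg e)"

definition noncrossing :: "point set set \<Rightarrow> bool" where
  "noncrossing E \<longleftrightarrow> (\<forall>e\<in>E. \<forall>f\<in>E. e \<noteq> f \<longrightarrow> edge_seg e \<inter> edge_seg f = e \<inter> f)"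

definition grid :: "nat \<Rightarrow> nat \<Rightarrow> point set" where
  "grid n m = {(real i, real j) | i j. i \<in> {1..n} \<and> j \<in> {1..m}}"

end

theory Submission
  imports Defs
begin

text \<open>
  Call a grid column free if no edge lies on its vertical line, and likewise for rows. If no column
  is free, each of the n vertical lines carries an edge, so the tree has at least 2n vertices and
  hence 2n - 1 edges; the same holds for rows. Otherwise let the extreme free columns and rows span
  the rectangle [i1, i2] x [j1, j2]. Every non-free column or row outside it carries an edge of its
  own, and an edge meets the boundary of the rectangle in at most two grid points, since a segment
  through three boundary points would lie on a side. Counting gives at least n + m - 2 edges, and
  n + m - 1 if the rectangle is degenerate.

  In the case of equality the edges pair the boundary grid points into disjoint chords. On the
  2 x 2 grid the chords are the two diagonals, whose intersection is an inner point of both, so the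
  two edges of the tree cannot share a vertex. For a noncrossing tree, choose a chord with the
  fewest boundary points strictly to its left. Some such point exists, because the rectangle
  extends to both sides of the chord near its midpoint. The chord through that point cannot cross
  the first one, so it lies entirely to the left, and one of its two orientations has strictly
  fewer boundary points to its left.
\<close>

lemma card_le_mult_card_cover:
  assumes "finite K" "S \<subseteq> (\<Union>k\<in>K. A k)" "\<And>k. k \<in> K \<Longrightarrow> card (A k \<inter> S) \<le> c"
  shows "card S \<le> c * card K"
proof -
  have "S = (\<Union>k\<in>K. A k \<inter> S)" using assms(2) by blast
  then have "card S \<le> (\<Sum>k\<in>K. card (A k \<inter> S))" using card_UN_le[OF assms(1)] by metis
  also have "\<dots> \<le> c * card K"
    using sum_bounded_above[of K "\<lambda>k. card (A k \<inter> S)" c] assms(3) by (simp add: mult.commute)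
  finally show ?thesis .
qed

lemma exact_double_cover:
  assumes fin: "finite K" "\<And>k. k \<in> K \<Longrightarrow> finite (A k)" and le2: "\<And>k. k \<in> K \<Longrightarrow> card (A k) \<le> 2"
    and big: "2 * card K \<le> card (\<Union>k\<in>K. A k)"
  shows "k \<in> K \<Longrightarrow> card (A k) = 2"
    and "k \<in> K \<Longrightarrow> k' \<in> K \<Longrightarrow> k \<noteq> k' \<Longrightarrow> A k \<inter> A k' = {}"
proof -
  have bound: "card (\<Union>i\<in>K - D. A i) \<le> 2 * card (K - D)" for D
  proof -
    have "card (A k \<inter> (\<Union>i\<in>K - D. A i)) \<le> 2" if k: "k \<in> K - D" for k
      using le2[of k] k by (simp add: Int_absorb2 UN_upper)
    then show ?thesis using card_le_mult_card_cover[of "K - D" "\<Union>i\<in>K - D. A i" A 2] fin(1) by auto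
  qed
  show "card (A k) = 2" if k: "k \<in> K"
  proof (rule ccontr)
    assume "card (A k) \<noteq> 2"
    then have "card (A k) \<le> 1" using le2[OF k] by linarith
    have "(\<Union>i\<in>K. A i) = A k \<union> (\<Union>i\<in>K - {k}. A i)" using k by blast
    then have "card (\<Union>i\<in>K. A i) \<le> card (A k) + card (\<Union>i\<in>K - {k}. A i)"
      using card_Un_le by metis
    also have "\<dots> \<le> 1 + 2 * card (K - {k})" using \<open>card (A k) \<le> 1\<close> bound[of "{k}"] by linarith
    finally show False using big card.remove[OF fin(1) k] by linarith
  qed
  show "A k \<inter> A k' = {}" if k: "k \<in> K" "k' \<in> K" "k \<noteq> k'"
  proof (rule ccontr)
    assume "A k \<inter> A k' \<noteq> {}"
    then have "1 \<le> card (A k \<inter> A k')" using fin(2)[OF k(1)] by (simp add: Suc_le_eq card_gt_0_iff)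
    then have "card (A k \<union> A k') \<le> 3"
      using card_Un_Int[OF fin(2)[OF k(1)] fin(2)[OF k(2)]] le2[OF k(1)] le2[OF k(2)] by linarith
    have "(\<Union>i\<in>K. A i) = (A k \<union> A k') \<union> (\<Union>i\<in>K - {k, k'}. A i)" using k by blast
    then have "card (\<Union>i\<in>K. A i) \<le> card (A k \<union> A k') + card (\<Union>i\<in>K - {k, k'}. A i)"
      using card_Un_le by metis
    also have "\<dots> \<le> 3 + 2 * card (K - {k, k'})"
      using \<open>card (A k \<union> A k') \<le> 3\<close> bound[of "{k, k'}"] by linarith
    finally have "card (\<Union>i\<in>K. A i) \<le> 3 + 2 * card (K - {k, k'})" .
    moreover have "K - {k} - {k'} = K - {k, k'}" by blast
    then have "card K = Suc (Suc (card (K - {k, k'})))"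
      using card.remove[OF fin(1) k(1)] card.remove[of "K - {k}" k'] fin(1) k by simp
    ultimately show False using big by linarith
  qed
qed

lemma connected_ex_parent_function:
  assumes "graph_connected V E" "r \<in> V"
  shows "\<exists>par (h :: 'a \<Rightarrow> nat). \<forall>w\<in>V - {r}. {par w, w} \<in> E \<and> h (par w) < h w"
proof -
  define R where "R = {(x, y). adj E x y}"
  define h where "h w = (LEAST k. (r, w) \<in> R ^^ k)" for w
  have "\<exists>y. {y, w} \<in> E \<and> h y < h w" if w: "w \<in> V" "w \<noteq> r" for w
  proof -
    have "(r, w) \<in> R\<^sup>*" using assms w unfolding graph_connected_def R_def by blast
    then obtain k where "(r, w) \<in> R ^^ k" by (auto simp: rtrancl_power)
    then have hw: "(r, w) \<in> R ^^ h w" unfolding h_def by (rule LeastI)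
    then obtain k' where k': "h w = Suc k'" using w(2) by (cases "h w") auto
    with hw obtain y where "(r, y) \<in> R ^^ k'" "(y, w) \<in> R" by auto
    moreover from this(1) have "h y \<le> k'" unfolding h_def by (rule Least_le)
    ultimately show ?thesis using k' unfolding R_def adj_def by auto
  qed
  then have "\<exists>par. \<forall>w\<in>V - {r}. {par w, w} \<in> E \<and> h (par w) < h w"
    by (intro bchoice) blast
  then show ?thesis by blast
qed

lemma card_vertices_le_if_connected:
  assumes "finite V" "V \<noteq> {}" "finite E" "graph_connected V E"
  shows "card V \<le> card E + 1"
proof -
  obtain r where r: "r \<in> V" using assms(2) by blast
  obtain par and h :: "_ \<Rightarrow> nat" where ph: "\<forall>w\<in>V - {r}. {par w, w} \<in> E \<and> h (par w) < h w"
    using connected_ex_parent_function[OF assms(4) r] by blast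
  have "inj_on (\<lambda>w. {par w, w}) (V - {r})"
  proof (rule inj_onI)
    fix w w' assume w: "w \<in> V - {r}" "w' \<in> V - {r}" and eq: "{par w, w} = {par w', w'}"
    show "w = w'"
    proof (rule ccontr)
      assume "w \<noteq> w'"
      then have "w = par w'" "w' = par w" using eq by (metis doubleton_eq_iff)+
      have "h (par w) < h w" "h (par w') < h w'" using ph w by auto
      moreover have "h w' < h w" using \<open>h (par w) < h w\<close> by (simp only: \<open>w' = par w\<close>)
      moreover have "h w < h w'" using \<open>h (par w') < h w'\<close> by (simp only: \<open>w = par w'\<close>)
      ultimately show False by linarith
    qed
  qed
  moreover have "(\<lambda>w. {par w, w}) ` (V - {r}) \<subseteq> E" using ph by auto
  ultimately have "card (V - {r}) \<le> card E" using card_inj_on_le[OF _ _ assms(3)] by blast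
  then show ?thesis using assms(1) r by simp
qed

section \<open>Segments and axis-parallel lines\<close>

lemma edge_seg_doubleton [simp]: "edge_seg {u, v} = closed_segment u v"
  unfolding edge_seg_def
proof (rule the_equality)
  fix s assume "\<exists>u' v'. {u, v} = {u', v'} \<and> s = closed_segment u' v'"
  then show "s = closed_segment u v"
    by (metis closed_segment_commute doubleton_eq_iff)
qed blast

lemma closed_segment_subset_level_set:
  fixes f :: "'a::real_vector \<Rightarrow> real"
  assumes "linear f" "a \<in> closed_segment u v" "c \<in> closed_segment u v" "a \<noteq> c" "f a = f c"
  shows "closed_segment u v \<subseteq> {p. f p = f a}"
proof -
  have f_seg: "f ((1 - r) *\<^sub>R u + r *\<^sub>R v) = f u + r * (f v - f u)" for r
    using assms(1) by (simp add: linear_add linear_scale) (simp add: algebra_simps)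
  obtain s where s: "a = (1 - s) *\<^sub>R u + s *\<^sub>R v" using assms(2) by (auto simp: closed_segment_def)
  obtain t where t: "c = (1 - t) *\<^sub>R u + t *\<^sub>R v" using assms(3) by (auto simp: closed_segment_def)
  have "s \<noteq> t" using s t assms(4) by auto
  moreover have "(s - t) * (f v - f u) = 0"
    using assms(5) f_seg[of s] f_seg[of t] unfolding s t by (simp add: algebra_simps)
  ultimately have "f v = f u" by simp
  then show ?thesis
    using f_seg unfolding s by (auto simp: closed_segment_def)
qed

lemma collinear_open_segment_cases:
  fixes x y z :: "'a::euclidean_space"
  assumes "collinear {x, y, z}" "x \<noteq> y" "y \<noteq> z" "x \<noteq> z"
  shows "x \<in> open_segment y z \<or> y \<in> open_segment z x \<or> z \<in> open_segment x y"
  using assms by (auto simp: collinear_between_cases between_mem_segment open_segment_def)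

lemma vertical_line_eq_iff: "{p :: point. fst p = a} = {p. fst p = b} \<longleftrightarrow> a = b"
proof
  assume eq: "{p :: point. fst p = a} = {p. fst p = b}"
  have "(a, 0) \<in> {p :: point. fst p = a}" by simp
  then show "a = b" unfolding eq by simp
qed simp

lemma horizontal_line_eq_iff: "{p :: point. snd p = a} = {p. snd p = b} \<longleftrightarrow> a = b"
proof
  assume eq: "{p :: point. snd p = a} = {p. snd p = b}"
  have "(0, a) \<in> {p :: point. snd p = a}" by simp
  then show "a = b" unfolding eq by simp
qed simp

lemma vertical_neq_horizontal_line: "{p :: point. fst p = a} \<noteq> {p. snd p = b}"
proof
  assume eq: "{p :: point. fst p = a} = {p. snd p = b}"
  have "(a, b + 1) \<in> {p :: point. fst p = a}" by simp
  then show False unfolding eq by simp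
qed

lemma axis_lines_meet_at_most_once:
  assumes "L \<in> range (\<lambda>a. {p :: point. fst p = a}) \<union> range (\<lambda>b. {p. snd p = b})"
    and "L' \<in> range (\<lambda>a. {p :: point. fst p = a}) \<union> range (\<lambda>b. {p. snd p = b})"
    and "L \<noteq> L'" "p \<in> L \<inter> L'" "q \<in> L \<inter> L'"
  shows "p = q"
proof -
  consider (vv) a a' where "L = {p. fst p = a}" "L' = {p. fst p = a'}"
    | (vh) a b where "L = {p. fst p = a}" "L' = {p. snd p = b}"
    | (hv) b a where "L = {p. snd p = b}" "L' = {p. fst p = a}"
    | (hh) b b' where "L = {p. snd p = b}" "L' = {p. snd p = b'}"
    using assms(1,2) by blast
  then show ?thesis
  proof cases
    case vv
    then have "a \<noteq> a'" using assms(3) by blast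
    then show ?thesis using assms(4) vv by simp
  next
    case vh
    then show ?thesis using assms(4,5) by (simp add: prod_eq_iff)
  next
    case hv
    then show ?thesis using assms(4,5) by (simp add: prod_eq_iff)
  next
    case hh
    then have "b \<noteq> b'" using assms(3) by blast
    then show ?thesis using assms(4) hh by simp
  qed
qed

section \<open>Rectangles and orientation\<close>

definition rect :: "real \<Rightarrow> real \<Rightarrow> real \<Rightarrow> real \<Rightarrow> point set" where
  "rect x1 x2 y1 y2 = {x1..x2} \<times> {y1..y2}"

definition rect_side_lines :: "real \<Rightarrow> real \<Rightarrow> real \<Rightarrow> real \<Rightarrow> point set set" where
  "rect_side_lines x1 x2 y1 y2 =
    {{p. fst p = x1}, {p. fst p = x2}, {p. snd p = y1}, {p. snd p = y2}}"

definition rect_boundary :: "real \<Rightarrow> real \<Rightarrow> real \<Rightarrow> real \<Rightarrow> point set" where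
  "rect_boundary x1 x2 y1 y2 = rect x1 x2 y1 y2 \<inter> \<Union>(rect_side_lines x1 x2 y1 y2)"

lemma convex_rect: "convex (rect x1 x2 y1 y2)"
  unfolding rect_def by (intro convex_Times convex_real_interval)

lemma closed_segment_subset_rect_side:
  assumes "L \<in> rect_side_lines x1 x2 y1 y2" "a \<in> closed_segment u v" "c \<in> closed_segment u v"
    and "a \<noteq> c" "a \<in> L" "c \<in> L"
  shows "closed_segment u v \<subseteq> L"
proof -
  from assms(1) consider (vertical) x where "L = {p. fst p = x}"
    | (horizontal) y where "L = {p. snd p = y}"
    unfolding rect_side_lines_def by blast
  then show ?thesis
  proof cases
    case vertical
    then show ?thesis
      using closed_segment_subset_level_set[OF linear_fst assms(2-4)] assms(5,6) by simp
  next
    case horizontal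
    then show ?thesis
      using closed_segment_subset_level_set[OF linear_snd assms(2-4)] assms(5,6) by simp
  qed
qed

lemma rect_side_face_of:
  assumes "L \<in> rect_side_lines x1 x2 y1 y2"
  shows "rect x1 x2 y1 y2 \<inter> L face_of rect x1 x2 y1 y2"
proof -
  have supporting: "rect x1 x2 y1 y2 \<inter> {p. w \<bullet> p = b} face_of rect x1 x2 y1 y2"
    if "\<And>p. p \<in> rect x1 x2 y1 y2 \<Longrightarrow> w \<bullet> p \<le> b" for w b
    using face_of_Int_supporting_hyperplane_le[OF convex_rect] that by blast
  from assms consider "L = {p. (-1, 0) \<bullet> p = - x1}" | "L = {p. (1, 0) \<bullet> p = x2}"
    | "L = {p. (0, -1) \<bullet> p = - y1}" | "L = {p. (0, 1) \<bullet> p = y2}"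
    unfolding rect_side_lines_def by (auto simp: inner_prod_def)
  then show ?thesis
  proof cases
    case 1 show ?thesis unfolding 1 by (rule supporting) (auto simp: rect_def inner_prod_def)
  next
    case 2 show ?thesis unfolding 2 by (rule supporting) (auto simp: rect_def inner_prod_def)
  next
    case 3 show ?thesis unfolding 3 by (rule supporting) (auto simp: rect_def inner_prod_def)
  next
    case 4 show ?thesis unfolding 4 by (rule supporting) (auto simp: rect_def inner_prod_def)
  qed
qed

text \<open>Twice the signed area of the triangle a c p: positive iff p lies to the left of the line
  from a to c.\<close>

definition orient :: "point \<Rightarrow> point \<Rightarrow> point \<Rightarrow> real" where
  "orient a c p = (fst c - fst a) * (snd p - snd a) - (snd c - snd a) * (fst p - fst a)"

lemma orient_affine:
  "orient a c ((1 - t) *\<^sub>R x + t *\<^sub>R z) = (1 - t) * orient a c x + t * orient a c z"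
  unfolding orient_def by (simp add: algebra_simps)

lemma orient_swap: "orient c a p = - orient a c p"
  unfolding orient_def by (simp add: algebra_simps)

lemma orient_self [simp]: "orient a c a = 0" "orient a c c = 0"
  unfolding orient_def by simp_all

lemma orient_inner:
  "orient a c p = (snd a - snd c, fst c - fst a) \<bullet> p - (snd a - snd c, fst c - fst a) \<bullet> a"
  unfolding orient_def by (simp add: inner_prod_def algebra_simps)

lemma convex_orient_pos: "convex {p. 0 < orient a c p}"
  using convex_halfspace_gt unfolding orient_inner by simp

lemma convex_orient_nonpos: "convex {p. orient a c p \<le> 0}"
  using convex_halfspace_le unfolding orient_inner by simp

lemma collinear_if_orient_eq_0:
  assumes "orient a c p = 0"
  shows "collinear {a, p, c}"
proof (cases "fst a = fst c")
  case True
  show ?thesis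
  proof (cases "snd a = snd c")
    case True
    with \<open>fst a = fst c\<close> have "a = c" by (simp add: prod_eq_iff)
    then show ?thesis by (simp add: insert_commute collinear_2)
  next
    case False
    define u where "u = (snd p - snd c) / (snd a - snd c)"
    have "u * (snd a - snd c) = snd p - snd c" using False by (simp add: u_def)
    moreover have "fst p = fst a" using True False assms by (simp add: orient_def)
    ultimately have "p = u *\<^sub>R a + (1 - u) *\<^sub>R c"
      using True by (simp add: prod_eq_iff algebra_simps)
    then show ?thesis unfolding collinear_3_expand by blast
  qed
next
  case False
  define u where "u = (fst p - fst c) / (fst a - fst c)"
  have "(fst a - fst c) * (snd p - snd c) = (snd a - snd c) * (fst p - fst c)"
    using assms orient_swap[of c a p] by (simp add: orient_def)
  then have "snd p - snd c = (snd a - snd c) * u" using False by (simp add: u_def field_simps)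
  moreover have "u * (fst a - fst c) = fst p - fst c" using False by (simp add: u_def)
  ultimately have "p = u *\<^sub>R a + (1 - u) *\<^sub>R c" by (simp add: prod_eq_iff algebra_simps)
  then show ?thesis unfolding collinear_3_expand by blast
qed

lemma orient_zero_on_segment:
  assumes "orient a c p * orient a c q < 0"
  shows "\<exists>X\<in>closed_segment p q. orient a c X = 0"
proof -
  define t where "t = orient a c p / (orient a c p - orient a c q)"
  have ne: "orient a c p - orient a c q \<noteq> 0" using assms by auto
  have "0 \<le> t" "t \<le> 1"
    using assms unfolding t_def by (auto simp: mult_less_0_iff divide_simps)
  moreover have "orient a c ((1 - t) *\<^sub>R p + t *\<^sub>R q) = 0"
    unfolding orient_affine t_def using ne by (simp add: field_simps)
  ultimately show ?thesis by (intro bexI[of _ "(1 - t) *\<^sub>R p + t *\<^sub>R q"]) (auto simp: in_segment)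
qed

lemma orient_le_0_on_rect:
  assumes corners: "\<forall>q\<in>{(x1, y1), (x1, y2), (x2, y1), (x2, y2)}. orient a c q \<le> 0"
    and p: "p \<in> rect x1 x2 y1 y2"
  shows "orient a c p \<le> 0"
proof -
  define \<alpha> where "\<alpha> = snd a - snd c"
  define \<beta> where "\<beta> = fst c - fst a"
  have diff: "orient a c p - orient a c q = \<alpha> * (fst p - fst q) + \<beta> * (snd p - snd q)" for q
    unfolding orient_def \<alpha>_def \<beta>_def by (simp add: algebra_simps)
  \<comment> \<open>the corner at which the affine function is maximal\<close>
  define x0 where "x0 = (if 0 \<le> \<alpha> then x2 else x1)"
  define y0 where "y0 = (if 0 \<le> \<beta> then y2 else y1)"
  have "\<alpha> * (fst p - x0) \<le> 0" "\<beta> * (snd p - y0) \<le> 0"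
    using p unfolding x0_def y0_def rect_def by (auto simp: mult_le_0_iff)
  then have "orient a c p \<le> orient a c (x0, y0)" using diff[of "(x0, y0)"] by simp
  also have "\<dots> \<le> 0" using corners unfolding x0_def y0_def by auto
  finally show ?thesis .
qed

lemma orient_not_max_at_interior:
  assumes "a \<noteq> c" "M \<in> interior S"
  shows "\<exists>P\<in>S. orient a c M < orient a c P"
proof -
  define w where "w = (snd a - snd c, fst c - fst a)"
  obtain \<epsilon> where \<epsilon>: "\<epsilon> > 0" "ball M \<epsilon> \<subseteq> S" using assms(2) mem_interior by blast
  have "w \<noteq> 0" using assms(1) unfolding w_def by (auto simp: prod_eq_iff)
  then have w: "norm w > 0" by simp
  define P where "P = M + (\<epsilon> / 2 / norm w) *\<^sub>R w"
  have "dist M P = \<epsilon> / 2" unfolding P_def dist_norm using w \<epsilon>(1) by simp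
  then have "P \<in> S" using \<epsilon> by auto
  moreover have "orient a c P = orient a c M + \<epsilon> / 2 * norm w"
    unfolding orient_inner w_def[symmetric] P_def using w
    by (simp add: inner_add_right power2_norm_eq_inner[symmetric] power2_eq_square)
  ultimately show ?thesis using \<epsilon>(1) w by (intro bexI[of _ P]) auto
qed

lemma card_vertices_on_levels:
  fixes f :: "point \<Rightarrow> real"
  assumes "finite V" and edges: "\<And>e. e \<in> E \<Longrightarrow> \<exists>u v. u \<in> V \<and> v \<in> V \<and> u \<noteq> v \<and> e = {u, v}"
    and levels: "\<And>c. c \<in> L \<Longrightarrow> \<exists>e\<in>E. edge_seg e \<subseteq> {p. f p = c}"
  shows "2 * card L \<le> card V"
proof (cases "finite L")
  case True
  define V_at where "V_at c = {p \<in> V. f p = c}" for c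
  have "2 \<le> card (V_at c)" if c: "c \<in> L" for c
  proof -
    obtain e where e: "e \<in> E" "edge_seg e \<subseteq> {p. f p = c}" using levels c by blast
    then obtain u v where "u \<in> V" "v \<in> V" "u \<noteq> v" "e = {u, v}" using edges by blast
    with e(2) have "{u, v} \<subseteq> V_at c" unfolding V_at_def by auto
    then show ?thesis
      using \<open>u \<noteq> v\<close> card_mono[of "V_at c" "{u, v}"] \<open>finite V\<close> unfolding V_at_def by simp
  qed
  then have "2 * card L \<le> (\<Sum>c\<in>L. card (V_at c))"
    using sum_bounded_below[of L 2 "\<lambda>c. card (V_at c)"] by (simp add: mult.commute)
  also have "\<dots> = card (\<Union>c\<in>L. V_at c)"
    using True \<open>finite V\<close> by (intro card_UN_disjoint[symmetric]) (auto simp: V_at_def)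
  also have "\<dots> \<le> card V" using \<open>finite V\<close> by (intro card_mono) (auto simp: V_at_def)
  finally show ?thesis .
qed simp

locale plane_graph =
  fixes E :: "point set set"
  assumes edge_doubleton: "e \<in> E \<Longrightarrow> \<exists>u v. u \<noteq> v \<and> e = {u, v}"
begin

lemma edge_segE:
  assumes "e \<in> E"
  obtains u v where "u \<noteq> v" "e = {u, v}" "edge_seg e = closed_segment u v"
  using edge_doubleton[OF assms] by auto

lemma closed_segment_subset_edge_seg:
  "e \<in> E \<Longrightarrow> a \<in> edge_seg e \<Longrightarrow> c \<in> edge_seg e \<Longrightarrow> closed_segment a c \<subseteq> edge_seg e"
  by (metis edge_segE closed_segment_subset convex_closed_segment)

lemma edge_vertex_notin_open_segment:
  assumes "e \<in> E" "a \<in> edge_seg e" "c \<in> edge_seg e" "X \<in> e"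
  shows "X \<notin> open_segment a c"
proof -
  obtain u v where "e = {u, v}" "edge_seg e = closed_segment u v" using edge_segE assms(1) .
  then have "X extreme_point_of edge_seg e" using assms(4) extreme_point_of_segment by auto
  then show ?thesis using assms(2,3) unfolding extreme_point_of_def by blast
qed

lemma card_lines_le_card_edges_on_lines:
  assumes "finite E"
    and on_line: "\<And>L. L \<in> \<L> \<Longrightarrow> \<exists>e\<in>E. edge_seg e \<subseteq> L"
    and meet: "\<And>L L' p q. L \<in> \<L> \<Longrightarrow> L' \<in> \<L> \<Longrightarrow> L \<noteq> L' \<Longrightarrow> {p, q} \<subseteq> L \<inter> L' \<Longrightarrow> p = q"
  shows "card \<L> \<le> card {e \<in> E. \<exists>L\<in>\<L>. edge_seg e \<subseteq> L}"
proof -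
  obtain g where g: "\<And>L. L \<in> \<L> \<Longrightarrow> g L \<in> E \<and> edge_seg (g L) \<subseteq> L"
    using bchoice[of \<L> "\<lambda>L e. e \<in> E \<and> edge_seg e \<subseteq> L"] on_line by blast
  have "inj_on g \<L>"
  proof (rule inj_onI)
    fix L L' assume L: "L \<in> \<L>" "L' \<in> \<L>" "g L = g L'"
    obtain u v where "u \<noteq> v" "edge_seg (g L) = closed_segment u v"
      using edge_segE g[OF L(1)] by metis
    then show "L = L'" using meet[OF L(1,2), of u v] g[OF L(1)] g[OF L(2)] L(3) by auto
  qed
  moreover have "g ` \<L> \<subseteq> {e \<in> E. \<exists>L\<in>\<L>. edge_seg e \<subseteq> L}" using g by blast
  ultimately show ?thesis using assms(1) by (intro card_inj_on_le) auto
qed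

lemma unit_square_diagonals_disjoint:
  assumes "e \<in> E" "(1, 1) \<in> edge_seg e" "(2, 2) \<in> edge_seg e"
    and "e' \<in> E" "(1, 2) \<in> edge_seg e'" "(2, 1) \<in> edge_seg e'"
  shows "e \<inter> e' = {}"
proof -
  have "X \<notin> e \<inter> e'" for X
  proof
    assume X: "X \<in> e \<inter> e'"
    obtain u v where uv: "e = {u, v}" "edge_seg e = closed_segment u v" using edge_segE assms(1) .
    obtain u' v' where uv': "e' = {u', v'}" "edge_seg e' = closed_segment u' v'"
      using edge_segE assms(4) .
    have diff: "linear (\<lambda>p::point. fst p - snd p)" and sum: "linear (\<lambda>p::point. fst p + snd p)"
      unfolding linear_iff by (simp_all add: algebra_simps)
    have "X \<in> closed_segment u v" "X \<in> closed_segment u' v'" using X uv uv' by auto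
    moreover have "closed_segment u v \<subseteq> {p. fst p - snd p = 0}"
      using closed_segment_subset_level_set[OF diff, of "(1, 1)" u v "(2, 2)"] assms(2,3) uv(2)
      by simp
    moreover have "closed_segment u' v' \<subseteq> {p. fst p + snd p = 3}"
      using closed_segment_subset_level_set[OF sum, of "(1, 2)" u' v' "(2, 1)"] assms(5,6) uv'(2)
      by simp
    ultimately have "fst X - snd X = 0" "fst X + snd X = 3" by blast+
    then have "X = (3/2, 3/2)" by (simp add: prod_eq_iff)
    moreover have "((3/2, 3/2) :: point) \<in> open_segment (1, 1) (2, 2)"
      unfolding in_segment by (auto intro!: exI[of _ "1/2"])
    ultimately show False using edge_vertex_notin_open_segment assms(1-3) X by blast
  qed
  then show ?thesis by blast
qed

end

section \<open>Rectangles whose sides carry no edge\<close>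

locale rect_free = plane_graph +
  fixes x1 x2 y1 y2 :: real
  assumes side_free: "e \<in> E \<Longrightarrow> L \<in> rect_side_lines x1 x2 y1 y2 \<Longrightarrow> \<not> edge_seg e \<subseteq> L"
begin

definition share_side :: "point \<Rightarrow> point \<Rightarrow> bool" where
  "share_side a c \<longleftrightarrow> (\<exists>L\<in>rect_side_lines x1 x2 y1 y2. a \<in> L \<and> c \<in> L)"

lemma edge_points_not_share_side:
  assumes "e \<in> E" "a \<in> edge_seg e" "c \<in> edge_seg e" "a \<noteq> c"
  shows "\<not> share_side a c"
proof
  assume "share_side a c"
  then obtain L where "L \<in> rect_side_lines x1 x2 y1 y2" "a \<in> L" "c \<in> L"
    unfolding share_side_def by blast
  moreover obtain u v where "edge_seg e = closed_segment u v" using edge_segE assms(1) .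
  ultimately show False
    using closed_segment_subset_rect_side side_free assms by metis
qed

lemma boundary_point_in_open_segment:
  assumes "y \<in> open_segment x z" "x \<in> rect x1 x2 y1 y2" "z \<in> rect x1 x2 y1 y2"
    and "y \<in> rect_boundary x1 x2 y1 y2"
  shows "share_side x y" "share_side y z" "share_side x z"
proof -
  obtain L where L: "L \<in> rect_side_lines x1 x2 y1 y2" "y \<in> rect x1 x2 y1 y2 \<inter> L"
    using assms(4) unfolding rect_boundary_def by blast
  then have "x \<in> L" "z \<in> L" using face_ofD[OF rect_side_face_of] assms(1-3) by blast+
  then show "share_side x y" "share_side y z" "share_side x z"
    using L unfolding share_side_def by blast+
qed

lemma no_three_boundary_points_on_edge:
  assumes "e \<in> E" "{p, q, r} \<subseteq> edge_seg e \<inter> rect_boundary x1 x2 y1 y2"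
    and "p \<noteq> q" "q \<noteq> r" "p \<noteq> r"
  shows False
proof -
  obtain u v where uv: "edge_seg e = closed_segment u v" using edge_segE assms(1) .
  have "{p, q, r} \<subseteq> closed_segment u v" using assms(2) uv by auto
  then have "collinear {p, q, r}" using collinear_subset collinear_closed_segment by blast
  then have "p \<in> open_segment q r \<or> q \<in> open_segment r p \<or> r \<in> open_segment p q"
    using collinear_open_segment_cases assms(3-5) by blast
  moreover have no_inner: "y \<notin> open_segment x z" if "{x, y, z} = {p, q, r}" for x y z
  proof
    assume y: "y \<in> open_segment x z"
    have xyz: "{x, y, z} \<subseteq> edge_seg e \<inter> rect_boundary x1 x2 y1 y2" using that assms(2) by simp
    then have "share_side x y"
      using boundary_point_in_open_segment(1)[OF y] unfolding rect_boundary_def by blast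
    moreover have "x \<noteq> y" using y by (auto simp: open_segment_def)
    ultimately show False using edge_points_not_share_side assms(1) xyz by blast
  qed
  ultimately show False
    using no_inner[of q p r] no_inner[of r q p] no_inner[of p r q] by (auto simp: insert_commute)
qed

lemma card_edge_boundary_le_2:
  assumes "e \<in> E" "S \<subseteq> rect_boundary x1 x2 y1 y2"
  shows "card (edge_seg e \<inter> S) \<le> 2"
proof (rule ccontr)
  assume "\<not> card (edge_seg e \<inter> S) \<le> 2"
  then have "3 \<le> card (edge_seg e \<inter> S)" by simp
  then obtain T where "T \<subseteq> edge_seg e \<inter> S" "card T = 3" by (rule obtain_subset_with_card_n)
  then obtain p q r where "T = {p, q, r}" "p \<noteq> q" "q \<noteq> r" "p \<noteq> r" unfolding card_3_iff by blast
  then show False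
    using no_three_boundary_points_on_edge[OF assms(1)] \<open>T \<subseteq> edge_seg e \<inter> S\<close> assms(2) by blast
qed

lemma on_line_imp_on_chord:
  assumes "b \<in> rect_boundary x1 x2 y1 y2" "d \<in> rect_boundary x1 x2 y1 y2" "\<not> share_side b d"
    and "Y \<in> rect x1 x2 y1 y2" "orient b d Y = 0"
  shows "Y \<in> closed_segment b d"
proof -
  have bd: "b \<in> rect x1 x2 y1 y2" "d \<in> rect x1 x2 y1 y2" "b \<noteq> d"
    using assms(1-3) unfolding rect_boundary_def share_side_def by auto
  show ?thesis
  proof (cases "Y = b \<or> Y = d")
    case False
    have "b \<notin> open_segment Y d" "d \<notin> open_segment b Y"
      using boundary_point_in_open_segment assms bd by blast+
    then have "Y \<in> open_segment d b"
      using collinear_open_segment_cases[OF collinear_if_orient_eq_0[OF assms(5)]] False bd(3)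
      by blast
    then show ?thesis using open_closed_segment closed_segment_commute by blast
  qed auto
qed

lemma card_edge_side_le_1:
  assumes "e \<in> E" "L \<in> rect_side_lines x1 x2 y1 y2" "S \<subseteq> L"
  shows "card (edge_seg e \<inter> S) \<le> 1"
proof (cases "finite (edge_seg e \<inter> S)")
  case True
  have "a = c" if "a \<in> edge_seg e \<inter> S" "c \<in> edge_seg e \<inter> S" for a c
    using edge_points_not_share_side[OF assms(1), of a c] that assms(2,3)
    unfolding share_side_def by blast
  then show ?thesis using card_le_Suc0_iff_eq[OF True] by auto
qed simp

end

section \<open>Chord matchings\<close>

locale chord_matching = rect_free +
  fixes B :: "point set"
  assumes finite_B: "finite B"
    and B_boundary: "B \<subseteq> rect_boundary x1 x2 y1 y2"
    and corners: "{(x1, y1), (x1, y2), (x2, y1), (x2, y2)} \<subseteq> B"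
    and B_covered: "p \<in> B \<Longrightarrow> \<exists>e\<in>E. p \<in> edge_seg e"
    and partner: "e \<in> E \<Longrightarrow> p \<in> B \<Longrightarrow> p \<in> edge_seg e \<Longrightarrow> \<exists>q\<in>B. q \<noteq> p \<and> q \<in> edge_seg e"
    and B_disjoint: "e \<in> E \<Longrightarrow> e' \<in> E \<Longrightarrow> e \<noteq> e' \<Longrightarrow> p \<in> edge_seg e \<Longrightarrow> p \<in> edge_seg e' \<Longrightarrow> p \<notin> B"
begin

definition chord :: "point \<Rightarrow> point \<Rightarrow> bool" where
  "chord a c \<longleftrightarrow> a \<in> B \<and> c \<in> B \<and> a \<noteq> c \<and> (\<exists>e\<in>E. a \<in> edge_seg e \<and> c \<in> edge_seg e)"

definition left_of :: "point \<Rightarrow> point \<Rightarrow> point set" where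
  "left_of a c = {p \<in> B. 0 < orient a c p}"

lemma B_rect: "p \<in> B \<Longrightarrow> p \<in> rect x1 x2 y1 y2"
  using B_boundary unfolding rect_boundary_def by blast

lemma chord_exists: "\<exists>a c. chord a c"
proof -
  have corner: "(x1, y1) \<in> B" using corners by simp
  then obtain e where "e \<in> E" "(x1, y1) \<in> edge_seg e" using B_covered by blast
  then show ?thesis using partner[OF _ corner] unfolding chord_def by (metis corner)
qed

lemma on_edge_iff_orient_eq_0:
  assumes "e \<in> E" "a \<in> edge_seg e" "c \<in> edge_seg e" "a \<in> B" "c \<in> B" "a \<noteq> c" "p \<in> B"
  shows "p \<in> edge_seg e \<longleftrightarrow> orient a c p = 0"
proof
  assume "p \<in> edge_seg e"
  then have "p = a \<or> p = c"
    using no_three_boundary_points_on_edge[OF assms(1), of a c p] assms B_boundary by blast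
  then show "orient a c p = 0" by auto
next
  assume "orient a c p = 0"
  then have "p \<in> closed_segment a c"
    using on_line_imp_on_chord edge_points_not_share_side assms B_boundary B_rect by blast
  then show "p \<in> edge_seg e" using closed_segment_subset_edge_seg assms(1-3) by blast
qed

lemma chord_left_of_nonempty:
  assumes "chord a c"
  shows "left_of a c \<noteq> {}"
proof
  assume empty: "left_of a c = {}"
  obtain e where e: "e \<in> E" "a \<in> edge_seg e" "c \<in> edge_seg e" and ac: "a \<in> B" "c \<in> B" "a \<noteq> c"
    using assms unfolding chord_def by blast
  define M where "M = (1 - 1/2) *\<^sub>R a + (1/2) *\<^sub>R c"
  have M: "M \<in> open_segment a c" unfolding M_def in_segment
    using ac(3) by (auto intro!: exI[of _ "1/2"])
  then have "M \<in> rect x1 x2 y1 y2"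
    using closed_segment_subset[OF B_rect B_rect convex_rect] ac open_closed_segment by blast
  moreover have "M \<notin> rect_boundary x1 x2 y1 y2"
    using boundary_point_in_open_segment(3)[OF M B_rect B_rect] ac
      edge_points_not_share_side[OF e ac(3)]
    by blast
  ultimately have "M \<in> interior (rect x1 x2 y1 y2)"
    by (auto simp: rect_def rect_boundary_def rect_side_lines_def interior_Times less_le)
  then obtain P where P: "P \<in> rect x1 x2 y1 y2" "orient a c M < orient a c P"
    using orient_not_max_at_interior ac(3) by blast
  have "orient a c q \<le> 0" if "q \<in> B" for q
    using empty that
    unfolding left_of_def by (metis (mono_tags, lifting) empty_iff mem_Collect_eq not_le)
  then have "orient a c P \<le> 0" using orient_le_0_on_rect[OF _ P(1)] corners by blast
  moreover have "orient a c M = 0" unfolding M_def orient_affine by simp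
  ultimately show False using P(2) by simp
qed

lemma chords_do_not_cross:
  assumes nc: "noncrossing E" and "chord a c" "chord b d" "orient a c b * orient a c d < 0"
  shows False
proof -
  obtain e1 where e1: "e1 \<in> E" "a \<in> edge_seg e1" "c \<in> edge_seg e1" "a \<in> B" "c \<in> B" "a \<noteq> c"
    using assms(2) unfolding chord_def by blast
  obtain e2 where e2: "e2 \<in> E" "b \<in> edge_seg e2" "d \<in> edge_seg e2" "b \<in> B" "d \<in> B" "b \<noteq> d"
    using assms(3) unfolding chord_def by blast
  have bd_off: "orient a c b \<noteq> 0" "orient a c d \<noteq> 0" using assms(4) by auto
  then have "b \<notin> edge_seg e1" using on_edge_iff_orient_eq_0[OF e1 e2(4)] by simp
  then have "e1 \<noteq> e2" using e2(2) by blast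
  obtain X where X: "X \<in> closed_segment b d" "orient a c X = 0"
    using orient_zero_on_segment[OF assms(4)] by blast
  have X_e2: "X \<in> edge_seg e2" using X(1) closed_segment_subset_edge_seg[OF e2(1-3)] by blast
  have "X \<in> rect x1 x2 y1 y2"
    using X(1) closed_segment_subset[OF B_rect B_rect convex_rect] e2(4,5) by blast
  then have X_ac: "X \<in> closed_segment a c"
    using on_line_imp_on_chord[of a c] X(2) edge_points_not_share_side[OF e1(1-3,6)] e1(4,5)
      B_boundary
    by blast
  have "p \<notin> edge_seg e2" if "p \<in> {a, c}" for p
  proof
    assume "p \<in> edge_seg e2"
    moreover have "p \<noteq> b" "p \<noteq> d" using that bd_off by auto
    ultimately show False
      using no_three_boundary_points_on_edge[OF e2(1), of p b d] that e1(4,5) e2 B_boundary by auto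
  qed
  then have "X \<in> open_segment a c" using X_ac X_e2 unfolding open_segment_def by blast
  moreover have "edge_seg e1 \<inter> edge_seg e2 = e1 \<inter> e2"
    using nc e1(1) e2(1) \<open>e1 \<noteq> e2\<close> unfolding noncrossing_def by blast
  then have "X \<in> e1" using X_e2 X_ac closed_segment_subset_edge_seg[OF e1(1-3)] by blast
  ultimately show False using edge_vertex_notin_open_segment[OF e1(1-3)] by blast
qed

lemma left_of_shrinks:
  assumes "chord a c" "chord b d" "0 < orient a c b" "0 < orient a c d" "orient b d a < 0"
  shows "left_of b d \<subset> left_of a c"
proof
  obtain e2 where e2: "e2 \<in> E" "b \<in> edge_seg e2" "d \<in> edge_seg e2" "b \<in> B" "d \<in> B" "b \<noteq> d"
    using assms(2) unfolding chord_def by blast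
  have "a \<in> B" using assms(1) unfolding chord_def by blast
  show "left_of b d \<subseteq> left_of a c"
  proof
    fix p assume "p \<in> left_of b d"
    then have p: "p \<in> B" "0 < orient b d p" unfolding left_of_def by auto
    show "p \<in> left_of a c"
    proof (rule ccontr)
      assume "p \<notin> left_of a c"
      then have "orient a c p \<le> 0" using p(1) unfolding left_of_def by auto
      have "orient b d a * orient b d p < 0" using assms(5) p(2) by (simp add: mult_neg_pos)
      then obtain Y where Y: "Y \<in> closed_segment a p" "orient b d Y = 0"
        using orient_zero_on_segment by blast
      \<comment> \<open>the segment from a to p crosses the line bd inside the rectangle, hence on the chord bd\<close>
      have "Y \<in> rect x1 x2 y1 y2"
        using Y(1) closed_segment_subset[OF B_rect B_rect convex_rect] \<open>a \<in> B\<close> p(1) by blast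
      then have "Y \<in> closed_segment b d"
        using on_line_imp_on_chord[of b d] Y(2) edge_points_not_share_side[OF e2(1-3,6)] e2(4,5)
          B_boundary
        by blast
      then have "0 < orient a c Y"
        using closed_segment_subset[OF _ _ convex_orient_pos, of b a c d] assms(3,4) by blast
      moreover have "orient a c Y \<le> 0"
        using closed_segment_subset[OF _ _ convex_orient_nonpos, of a a c p] \<open>orient a c p \<le> 0\<close> Y(1)
        by auto
      ultimately show False by simp
    qed
  qed
  have "b \<in> left_of a c" "b \<notin> left_of b d" using assms(3) e2(4) unfolding left_of_def by auto
  then show "left_of b d \<noteq> left_of a c" by blast
qed

lemma smaller_chord:
  assumes nc: "noncrossing E" and ac: "chord a c"
  shows "\<exists>b d. chord b d \<and> left_of b d \<subset> left_of a c"
proof -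
  obtain e1 where e1: "e1 \<in> E" "a \<in> edge_seg e1" "c \<in> edge_seg e1" "a \<in> B" "c \<in> B" "a \<noteq> c"
    using ac unfolding chord_def by blast
  obtain b where b: "b \<in> B" "0 < orient a c b"
    using chord_left_of_nonempty[OF ac] unfolding left_of_def by blast
  obtain e2 where e2: "e2 \<in> E" "b \<in> edge_seg e2" using B_covered b(1) by blast
  obtain d where d: "d \<in> B" "d \<noteq> b" "d \<in> edge_seg e2" using partner e2 b(1) by blast
  have bd: "chord b d" "chord d b" unfolding chord_def using b(1) d e2 by blast+
  have "b \<notin> edge_seg e1" using on_edge_iff_orient_eq_0[OF e1 b(1)] b(2) by simp
  then have "e1 \<noteq> e2" using e2(2) by blast
  have "d \<notin> edge_seg e1" using B_disjoint[OF e1(1) e2(1) \<open>e1 \<noteq> e2\<close>] d by blast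
  then have "orient a c d \<noteq> 0" using on_edge_iff_orient_eq_0[OF e1 d(1)] by simp
  then have d_left: "0 < orient a c d"
    using chords_do_not_cross[OF nc ac bd(1)] b(2) by (metis mult_pos_neg not_less_iff_gr_or_eq)
  have "a \<notin> edge_seg e2" using B_disjoint[OF e1(1) e2(1) \<open>e1 \<noteq> e2\<close>] e1(2,4) by blast
  then have "orient b d a \<noteq> 0"
    using on_edge_iff_orient_eq_0[OF e2(1,2) d(3) b(1) d(1) d(2)[symmetric] e1(4)] by simp
  then consider "orient b d a < 0" | "orient d b a < 0" using orient_swap[of d b a] by linarith
  then show ?thesis
  proof cases
    case 1 then show ?thesis using left_of_shrinks[OF ac bd(1) b(2) d_left] bd by blast
  next
    case 2 then show ?thesis using left_of_shrinks[OF ac bd(2) d_left b(2)] bd by blast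
  qed
qed

theorem not_noncrossing: "\<not> noncrossing E"
proof
  assume nc: "noncrossing E"
  have "\<not> chord a c" for a c
  proof (induction "card (left_of a c)" arbitrary: a c rule: less_induct)
    case less
    show ?case
    proof
      assume "chord a c"
      then obtain b d where "chord b d" "left_of b d \<subset> left_of a c" using smaller_chord nc by blast
      moreover have "finite (left_of a c)" using finite_B unfolding left_of_def by simp
      ultimately show False using less psubset_card_mono by blast
    qed
  qed
  then show False using chord_exists by blast
qed

lemma common_edge_if_others_share_side:
  assumes "p \<in> B" "q \<in> B" and others: "\<And>r. r \<in> B \<Longrightarrow> r \<noteq> p \<Longrightarrow> r \<noteq> q \<Longrightarrow> share_side p r"
  shows "\<exists>e\<in>E. p \<in> edge_seg e \<and> q \<in> edge_seg e"
proof -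
  obtain e where e: "e \<in> E" "p \<in> edge_seg e" using B_covered assms(1) by blast
  then obtain r where r: "r \<in> B" "r \<noteq> p" "r \<in> edge_seg e" using partner assms(1) by blast
  then have "r = q" using edge_points_not_share_side e others by blast
  then show ?thesis using e r by blast
qed

lemma unit_square_disjoint_edges:
  assumes "x1 = 1" "x2 = 2" "y1 = 1" "y2 = 2" and B: "B = {(1, 1), (1, 2), (2, 1), (2, 2)}"
  shows "\<exists>e\<in>E. \<exists>e'\<in>E. e \<inter> e' = {}"
proof -
  have sides: "{p. fst p = 1} \<in> rect_side_lines x1 x2 y1 y2"
    "{p. snd p = 1} \<in> rect_side_lines x1 x2 y1 y2"
    "{p. snd p = 2} \<in> rect_side_lines x1 x2 y1 y2"
    unfolding rect_side_lines_def using assms(1-4) by simp_all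
  have shared: "share_side p q" if "L \<in> rect_side_lines x1 x2 y1 y2" "p \<in> L" "q \<in> L" for L p q
    unfolding share_side_def using that by blast
  have "share_side (1, 1) r" if "r \<in> B" "r \<noteq> (1, 1)" "r \<noteq> (2, 2)" for r
  proof -
    have "r = (1, 2) \<or> r = (2, 1)" using that B by blast
    then show ?thesis using shared[OF sides(1)] shared[OF sides(2)] by auto
  qed
  then obtain e where e: "e \<in> E" "(1, 1) \<in> edge_seg e" "(2, 2) \<in> edge_seg e"
    using common_edge_if_others_share_side[of "(1, 1)" "(2, 2)"] B by blast
  have "share_side (1, 2) r" if "r \<in> B" "r \<noteq> (1, 2)" "r \<noteq> (2, 1)" for r
  proof -
    have "r = (1, 1) \<or> r = (2, 2)" using that B by blast
    then show ?thesis using shared[OF sides(1)] shared[OF sides(3)] by auto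
  qed
  then obtain e' where e': "e' \<in> E" "(1, 2) \<in> edge_seg e'" "(2, 1) \<in> edge_seg e'"
    using common_edge_if_others_share_side[of "(1, 2)" "(2, 1)"] B by blast
  show ?thesis using unit_square_diagonals_disjoint[OF e e'] e(1) e'(1) by blast
qed

end

section \<open>Trees covering a grid\<close>

locale grid_cover =
  fixes n m :: nat and V :: "point set" and E :: "point set set"
  assumes tree: "geometric_tree V E" and covers_grid: "covers E (grid n m)"
begin

lemma finite_V: "finite V" and connected: "graph_connected V E" and E_nonempty: "E \<noteq> {}"
  and edge_vertices: "e \<in> E \<Longrightarrow> \<exists>u v. u \<in> V \<and> v \<in> V \<and> u \<noteq> v \<and> e = {u, v}"
  using tree unfolding geometric_tree_def is_tree_def by blast+

sublocale plane_graph E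
  using edge_vertices by unfold_locales blast

lemma finite_E: "finite E"
proof -
  have "E \<subseteq> Pow V" using edge_vertices by blast
  then show ?thesis using finite_V by (simp add: finite_subset)
qed

lemma card_V_le: "card V \<le> card E + 1"
proof -
  have "V \<noteq> {}" using E_nonempty edge_vertices by blast
  then show ?thesis using card_vertices_le_if_connected finite_V finite_E connected by blast
qed

lemma grid_covered: "p \<in> grid n m \<Longrightarrow> \<exists>e\<in>E. p \<in> edge_seg e"
  using covers_grid unfolding covers_def by blast

lemma edges_meet_if_card_2:
  assumes "card E = 2" "e \<in> E" "e' \<in> E"
  shows "e \<inter> e' \<noteq> {}"
proof
  assume disjoint: "e \<inter> e' = {}"
  obtain u v u' v' where uv: "u \<in> V" "e = {u, v}" "u' \<in> V" "e' = {u', v'}"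
    using edge_vertices assms(2,3) by meson
  obtain x y where xy: "E = {x, y}" using assms(1) unfolding card_2_iff by blast
  have "e \<noteq> e'" using disjoint uv(2) by blast
  then have E: "E = {e, e'}" using xy assms(2,3) by blast
  have "(u, u') \<in> {(x, y). adj E x y}\<^sup>*" using connected uv unfolding graph_connected_def by blast
  moreover have "z \<in> e" if "(u, z) \<in> {(x, y). adj E x y}\<^sup>*" for z
    using that
  proof (induction rule: rtrancl_induct)
    case base
    then show ?case using uv by simp
  next
    case (step y z)
    then have "{y, z} \<in> E" unfolding adj_def by simp
    moreover have "{y, z} \<noteq> e'" using step.IH disjoint by blast
    ultimately have "{y, z} = e" using E by blast
    then show ?case by blast
  qed
  ultimately have "u' \<in> e" by blast
  then show False using disjoint uv by blast
qed

definition free_line :: "point set \<Rightarrow> bool" where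
  "free_line L \<longleftrightarrow> (\<forall>e\<in>E. \<not> edge_seg e \<subseteq> L)"

definition "free_cols = {i \<in> {1..n}. free_line {p. fst p = real i}}"
definition "free_rows = {j \<in> {1..m}. free_line {p. snd p = real j}}"

lemma no_free_col:
  assumes "free_cols = {}"
  shows "2 * n - 1 \<le> card E"
proof -
  have "\<exists>e\<in>E. edge_seg e \<subseteq> {p. fst p = c}" if c: "c \<in> real ` {1..n}" for c
  proof -
    obtain i where "i \<in> {1..n}" "c = real i" using c by blast
    then show ?thesis using assms unfolding free_cols_def free_line_def by blast
  qed
  then have "2 * card (real ` {1..n}) \<le> card V"
    using card_vertices_on_levels[OF finite_V edge_vertices] by blast
  moreover have "card (real ` {1..n}) = n" by (simp add: card_image inj_on_def)
  ultimately show ?thesis using card_V_le by linarith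
qed

lemma no_free_row:
  assumes "free_rows = {}"
  shows "2 * m - 1 \<le> card E"
proof -
  have "\<exists>e\<in>E. edge_seg e \<subseteq> {p. snd p = c}" if c: "c \<in> real ` {1..m}" for c
  proof -
    obtain j where "j \<in> {1..m}" "c = real j" using c by blast
    then show ?thesis using assms unfolding free_rows_def free_line_def by blast
  qed
  then have "2 * card (real ` {1..m}) \<le> card V"
    using card_vertices_on_levels[OF finite_V edge_vertices] by blast
  moreover have "card (real ` {1..m}) = m" by (simp add: card_image inj_on_def)
  ultimately show ?thesis using card_V_le by linarith
qed

end

locale free_box = grid_cover +
  assumes free_cols_nonempty: "free_cols \<noteq> {}" and free_rows_nonempty: "free_rows \<noteq> {}"
begin

definition "i1 = Min free_cols"
definition "i2 = Max free_cols"
definition "j1 = Min free_rows"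
definition "j2 = Max free_rows"

lemma extreme_free_cols: "1 \<le> i1" "i1 \<le> i2" "i2 \<le> n"
    "free_line {p. fst p = real i1}" "free_line {p. fst p = real i2}"
  and not_free_col: "i \<in> {1..n} \<Longrightarrow> i < i1 \<or> i2 < i \<Longrightarrow> \<not> free_line {p. fst p = real i}"
proof -
  have fin: "finite free_cols" unfolding free_cols_def by simp
  have in_cols: "i1 \<in> free_cols" "i2 \<in> free_cols"
    unfolding i1_def i2_def using fin free_cols_nonempty by simp_all
  then show "1 \<le> i1" "i2 \<le> n" "free_line {p. fst p = real i1}" "free_line {p. fst p = real i2}"
    unfolding free_cols_def by simp_all
  show "i1 \<le> i2" using Min_le[OF fin in_cols(2)] unfolding i1_def .
  show "\<not> free_line {p. fst p = real i}" if i: "i \<in> {1..n}" "i < i1 \<or> i2 < i"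
  proof
    assume "free_line {p. fst p = real i}"
    then have "i \<in> free_cols" using i(1) unfolding free_cols_def by simp
    then show False using i(2) Min_le[OF fin] Max_ge[OF fin] unfolding i1_def i2_def by fastforce
  qed
qed

lemma extreme_free_rows: "1 \<le> j1" "j1 \<le> j2" "j2 \<le> m"
    "free_line {p. snd p = real j1}" "free_line {p. snd p = real j2}"
  and not_free_row: "j \<in> {1..m} \<Longrightarrow> j < j1 \<or> j2 < j \<Longrightarrow> \<not> free_line {p. snd p = real j}"
proof -
  have fin: "finite free_rows" unfolding free_rows_def by simp
  have in_rows: "j1 \<in> free_rows" "j2 \<in> free_rows"
    unfolding j1_def j2_def using fin free_rows_nonempty by simp_all
  then show "1 \<le> j1" "j2 \<le> m" "free_line {p. snd p = real j1}" "free_line {p. snd p = real j2}"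
    unfolding free_rows_def by simp_all
  show "j1 \<le> j2" using Min_le[OF fin in_rows(2)] unfolding j1_def .
  show "\<not> free_line {p. snd p = real j}" if j: "j \<in> {1..m}" "j < j1 \<or> j2 < j"
  proof
    assume "free_line {p. snd p = real j}"
    then have "j \<in> free_rows" using j(1) unfolding free_rows_def by simp
    then show False using j(2) Min_le[OF fin] Max_ge[OF fin] unfolding j1_def j2_def by fastforce
  qed
qed

lemma rect_free_box: "rect_free E (real i1) (real i2) (real j1) (real j2)"
proof
  show "\<not> edge_seg e \<subseteq> L"
    if "e \<in> E" "L \<in> rect_side_lines (real i1) (real i2) (real j1) (real j2)" for e L
    using that extreme_free_cols(4,5) extreme_free_rows(4,5)
    unfolding rect_side_lines_def free_line_def by auto
qed

sublocale rect_free E "real i1" "real i2" "real j1" "real j2"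
  by (rule rect_free_box)

definition "boundary_points = grid n m \<inter> rect_boundary (real i1) (real i2) (real j1) (real j2)"
definition "boundary_edges = {e \<in> E. edge_seg e \<inter> boundary_points \<noteq> {}}"
definition "outer_cols = {i \<in> {1..n}. i < i1 \<or> i2 < i}"
definition "outer_rows = {j \<in> {1..m}. j < j1 \<or> j2 < j}"
definition "outer_lines =
  (\<lambda>i. {p. fst p = real i}) ` outer_cols \<union> (\<lambda>j. {p. snd p = real j}) ` outer_rows"

lemma grid_point_in_boundary:
  assumes "i1 \<le> i" "i \<le> i2" "j1 \<le> j" "j \<le> j2" "i = i1 \<or> i = i2 \<or> j = j1 \<or> j = j2"
  shows "(real i, real j) \<in> boundary_points"
proof -
  have "i \<in> {1..n}" "j \<in> {1..m}" using assms extreme_free_cols extreme_free_rows by auto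
  then have "(real i, real j) \<in> grid n m" unfolding grid_def by blast
  moreover have "(real i, real j) \<in> rect_boundary (real i1) (real i2) (real j1) (real j2)"
    using assms unfolding rect_boundary_def rect_def rect_side_lines_def by auto
  ultimately show ?thesis unfolding boundary_points_def by blast
qed

lemma finite_boundary_points: "finite boundary_points"
proof -
  have "grid n m = (\<lambda>(i, j). (real i, real j)) ` ({1..n} \<times> {1..m})" unfolding grid_def by auto
  then show ?thesis unfolding boundary_points_def by simp
qed

lemma finite_boundary_edges: "finite boundary_edges"
  using finite_E unfolding boundary_edges_def by simp

lemma boundary_points_covered: "boundary_points \<subseteq> (\<Union>e\<in>boundary_edges. edge_seg e)"
  using grid_covered unfolding boundary_points_def boundary_edges_def by blast

lemma card_outer_lines: "card outer_lines = (i1 - 1) + (n - i2) + (j1 - 1) + (m - j2)"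
proof -
  have "outer_cols = {1..<i1} \<union> {i2<..n}" using extreme_free_cols by (auto simp: outer_cols_def)
  moreover have "card ({1..<i1} \<union> {i2<..n}) = (i1 - 1) + (n - i2)"
    using extreme_free_cols by (subst card_Un_disjoint) auto
  ultimately have c: "card outer_cols = (i1 - 1) + (n - i2)" by simp
  have "outer_rows = {1..<j1} \<union> {j2<..m}" using extreme_free_rows by (auto simp: outer_rows_def)
  moreover have "card ({1..<j1} \<union> {j2<..m}) = (j1 - 1) + (m - j2)"
    using extreme_free_rows by (subst card_Un_disjoint) auto
  ultimately have r: "card outer_rows = (j1 - 1) + (m - j2)" by simp
  have "card ((\<lambda>i. {p :: point. fst p = real i}) ` outer_cols) = card outer_cols"
    by (rule card_image) (simp add: inj_on_def vertical_line_eq_iff)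
  moreover have "card ((\<lambda>j. {p :: point. snd p = real j}) ` outer_rows) = card outer_rows"
    by (rule card_image) (simp add: inj_on_def horizontal_line_eq_iff)
  moreover have
    "(\<lambda>i. {p :: point. fst p = real i}) ` outer_cols \<inter> (\<lambda>j. {p. snd p = real j}) ` outer_rows = {}"
    using vertical_neq_horizontal_line by blast
  moreover have "finite outer_cols" "finite outer_rows"
    unfolding outer_cols_def outer_rows_def by simp_all
  ultimately show ?thesis unfolding outer_lines_def c r by (simp add: card_Un_disjoint)
qed

lemma card_boundary_edges_outer_lines: "card boundary_edges + card outer_lines \<le> card E"
proof -
  define on_outer where "on_outer = {e \<in> E. \<exists>L\<in>outer_lines. edge_seg e \<subseteq> L}"
  have "card outer_lines \<le> card on_outer"
    unfolding on_outer_def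
  proof (rule card_lines_le_card_edges_on_lines[OF finite_E])
    show "\<exists>e\<in>E. edge_seg e \<subseteq> L" if "L \<in> outer_lines" for L
    proof -
      from that consider i where "i \<in> outer_cols" "L = {p. fst p = real i}"
        | j where "j \<in> outer_rows" "L = {p. snd p = real j}"
        unfolding outer_lines_def by blast
      then show ?thesis
        using not_free_col not_free_row
        unfolding outer_cols_def outer_rows_def free_line_def by cases blast+
    qed
    have "outer_lines \<subseteq> range (\<lambda>a. {p :: point. fst p = a}) \<union> range (\<lambda>b. {p. snd p = b})"
      unfolding outer_lines_def by blast
    then show "p = q"
      if "L \<in> outer_lines" "L' \<in> outer_lines" "L \<noteq> L'" "{p, q} \<subseteq> L \<inter> L'" for L L' p q
      using axis_lines_meet_at_most_once[of L L' p q] that by blast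
  qed
  moreover have "boundary_edges \<inter> on_outer = {}"
  proof -
    have "L \<inter> rect (real i1) (real i2) (real j1) (real j2) = {}" if "L \<in> outer_lines" for L
      using that unfolding outer_lines_def outer_cols_def outer_rows_def rect_def by auto
    then show ?thesis
      unfolding boundary_edges_def on_outer_def boundary_points_def rect_boundary_def by blast
  qed
  moreover have "boundary_edges \<union> on_outer \<subseteq> E" unfolding boundary_edges_def on_outer_def by blast
  then have "card (boundary_edges \<union> on_outer) \<le> card E" using finite_E by (rule card_mono[rotated])
  moreover have "finite on_outer" using finite_E unfolding on_outer_def by simp
  ultimately show ?thesis using finite_boundary_edges by (simp add: card_Un_disjoint)
qed

lemma card_boundary_points_nondegenerate:
  assumes "i1 < i2" "j1 < j2"
  shows "2 * (i2 - i1) + 2 * (j2 - j1) \<le> card boundary_points"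
proof -
  define bot where "bot = (\<lambda>i. (real i, real j1)) ` {i1..<i2}"
  define rgt where "rgt = (\<lambda>j. (real i2, real j)) ` {j1..<j2}"
  define top where "top = (\<lambda>i. (real i, real j2)) ` {i1<..i2}"
  define lft where "lft = (\<lambda>j. (real i1, real j)) ` {j1<..j2}"
  have "card bot = i2 - i1" "card rgt = j2 - j1" "card top = i2 - i1" "card lft = j2 - j1"
    unfolding bot_def rgt_def top_def lft_def by (simp_all add: card_image inj_on_def)
  moreover have "bot \<inter> rgt = {}" "(bot \<union> rgt) \<inter> top = {}" "(bot \<union> rgt \<union> top) \<inter> lft = {}"
    using assms unfolding bot_def rgt_def top_def lft_def by auto
  moreover have "finite bot" "finite rgt" "finite top" "finite lft"
    unfolding bot_def rgt_def top_def lft_def by simp_all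
  ultimately have "card (bot \<union> rgt \<union> top \<union> lft) = 2 * (i2 - i1) + 2 * (j2 - j1)"
    by (simp add: card_Un_disjoint)
  moreover have "bot \<union> rgt \<union> top \<union> lft \<subseteq> boundary_points"
    unfolding bot_def rgt_def top_def lft_def using assms by (auto intro!: grid_point_in_boundary)
  then have "card (bot \<union> rgt \<union> top \<union> lft) \<le> card boundary_points"
    using finite_boundary_points by (rule card_mono[rotated])
  ultimately show ?thesis by linarith
qed

lemma card_boundary_points_degenerate:
  assumes "i1 = i2 \<or> j1 = j2"
  shows "(i2 - i1) + (j2 - j1) + 1 \<le> card boundary_points"
  using assms
proof
  assume i: "i1 = i2"
  have "(\<lambda>j. (real i1, real j)) ` {j1..j2} \<subseteq> boundary_points"
    using i by (auto intro!: grid_point_in_boundary)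
  then have "card ((\<lambda>j. (real i1, real j)) ` {j1..j2}) \<le> card boundary_points"
    using finite_boundary_points by (rule card_mono[rotated])
  then show ?thesis using i extreme_free_rows by (simp add: card_image inj_on_def)
next
  assume j: "j1 = j2"
  have "(\<lambda>i. (real i, real j1)) ` {i1..i2} \<subseteq> boundary_points"
    using j by (auto intro!: grid_point_in_boundary)
  then have "card ((\<lambda>i. (real i, real j1)) ` {i1..i2}) \<le> card boundary_points"
    using finite_boundary_points by (rule card_mono[rotated])
  then show ?thesis using j extreme_free_cols by (simp add: card_image inj_on_def)
qed

lemma card_edge_boundary_points_degenerate:
  assumes "i1 = i2 \<or> j1 = j2" "e \<in> E"
  shows "card (edge_seg e \<inter> boundary_points) \<le> 1"
proof -
  have "\<exists>L\<in>rect_side_lines (real i1) (real i2) (real j1) (real j2). boundary_points \<subseteq> L"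
    using assms(1)
    unfolding boundary_points_def rect_boundary_def rect_def rect_side_lines_def by auto
  then show ?thesis using card_edge_side_le_1[OF assms(2)] by blast
qed

lemma degenerate_bound:
  assumes "i1 = i2 \<or> j1 = j2"
  shows "n + m - 1 \<le> card E"
proof -
  have "card boundary_points \<le> 1 * card boundary_edges"
    using card_le_mult_card_cover[OF finite_boundary_edges boundary_points_covered]
      card_edge_boundary_points_degenerate[OF assms]
    unfolding boundary_edges_def by blast
  then show ?thesis
    using card_boundary_points_degenerate[OF assms] card_boundary_edges_outer_lines card_outer_lines
      extreme_free_cols extreme_free_rows by linarith
qed

lemma nondegenerate_bounds:
  assumes "i1 < i2" "j1 < j2"
  shows "n + m - 2 \<le> card E"
    and "card E \<le> n + m - 2 \<Longrightarrow> 2 * card boundary_edges \<le> card boundary_points"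
proof -
  have "card (edge_seg e \<inter> boundary_points) \<le> 2" if "e \<in> boundary_edges" for e
    using card_edge_boundary_le_2[of e boundary_points] that
    unfolding boundary_edges_def boundary_points_def by auto
  then have "card boundary_points \<le> 2 * card boundary_edges"
    by (rule card_le_mult_card_cover[OF finite_boundary_edges boundary_points_covered])
  note counts = this card_boundary_points_nondegenerate[OF assms] card_boundary_edges_outer_lines
    card_outer_lines extreme_free_cols extreme_free_rows
  show "n + m - 2 \<le> card E" using counts by linarith
  show "2 * card boundary_edges \<le> card boundary_points" if "card E \<le> n + m - 2"
    using that counts by linarith
qed

lemma lower_bound: "n + m - 2 \<le> card E"
proof (cases "i1 = i2 \<or> j1 = j2")
  case True
  then show ?thesis using degenerate_bound by linarith
next
  case False
  then have "i1 < i2" "j1 < j2" using extreme_free_cols(2) extreme_free_rows(2) by auto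
  then show ?thesis by (rule nondegenerate_bounds(1))
qed

lemma tight_nondegenerate:
  assumes "card E \<le> n + m - 2"
  shows "i1 < i2" "j1 < j2"
  using degenerate_bound assms extreme_free_cols extreme_free_rows by fastforce+

lemma tight_boundary_edges:
  assumes "card E \<le> n + m - 2"
  shows "e \<in> boundary_edges \<Longrightarrow> card (edge_seg e \<inter> boundary_points) = 2"
    and "e \<in> boundary_edges \<Longrightarrow> e' \<in> boundary_edges \<Longrightarrow> e \<noteq> e'
      \<Longrightarrow> edge_seg e \<inter> edge_seg e' \<inter> boundary_points = {}"
proof -
  have "(\<Union>e\<in>boundary_edges. edge_seg e \<inter> boundary_points) = boundary_points"
    using boundary_points_covered by blast
  then have big: "2 * card boundary_edges \<le> card (\<Union>e\<in>boundary_edges. edge_seg e \<inter> boundary_points)"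
    using nondegenerate_bounds(2)[OF tight_nondegenerate[OF assms] assms] by simp
  have fin: "finite (edge_seg e \<inter> boundary_points)" for e
    using finite_boundary_points by simp
  have le2: "card (edge_seg e \<inter> boundary_points) \<le> 2" if "e \<in> boundary_edges" for e
    using card_edge_boundary_le_2[of e boundary_points] that
    unfolding boundary_edges_def boundary_points_def by auto
  note exact = exact_double_cover[OF finite_boundary_edges fin le2 big]
  show "e \<in> boundary_edges \<Longrightarrow> card (edge_seg e \<inter> boundary_points) = 2"
    by (rule exact(1))
  show "e \<in> boundary_edges \<Longrightarrow> e' \<in> boundary_edges \<Longrightarrow> e \<noteq> e'
      \<Longrightarrow> edge_seg e \<inter> edge_seg e' \<inter> boundary_points = {}"
    using exact(2)[of e e'] by blast
qed

lemma tight_chord_matching: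
  assumes "card E \<le> n + m - 2"
  shows "chord_matching E (real i1) (real i2) (real j1) (real j2) boundary_points"
proof (rule chord_matching.intro[OF rect_free_box], unfold_locales)
  show "finite boundary_points" by (rule finite_boundary_points)
  show "boundary_points \<subseteq> rect_boundary (real i1) (real i2) (real j1) (real j2)"
    unfolding boundary_points_def by blast
  show "{(real i1, real j1), (real i1, real j2), (real i2, real j1), (real i2, real j2)}
    \<subseteq> boundary_points"
    using extreme_free_cols extreme_free_rows by (auto intro!: grid_point_in_boundary)
  show "\<exists>e\<in>E. p \<in> edge_seg e" if "p \<in> boundary_points" for p
    using that boundary_points_covered unfolding boundary_edges_def by blast
  show "\<exists>q\<in>boundary_points. q \<noteq> p \<and> q \<in> edge_seg e"
    if "e \<in> E" "p \<in> boundary_points" "p \<in> edge_seg e" for e p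
  proof -
    have "e \<in> boundary_edges" using that unfolding boundary_edges_def by blast
    then have "card (edge_seg e \<inter> boundary_points - {p}) = 1"
      using tight_boundary_edges(1)[OF assms] that(2,3) by (simp add: card_Diff_singleton_if)
    then obtain q where "q \<in> edge_seg e \<inter> boundary_points - {p}"
      by (metis card_1_singletonE insertI1)
    then show ?thesis by blast
  qed
  show "p \<notin> boundary_points"
    if "e \<in> E" "e' \<in> E" "e \<noteq> e'" "p \<in> edge_seg e" "p \<in> edge_seg e'" for e e' p
    using that tight_boundary_edges(2)[OF assms, of e e'] unfolding boundary_edges_def by blast
qed

lemma unit_square_bound:
  assumes "n \<le> 2" "m \<le> 2"
  shows "n + m - 1 \<le> card E"
proof (rule ccontr)
  assume "\<not> n + m - 1 \<le> card E"
  then have tight: "card E \<le> n + m - 2" by linarith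
  interpret chord_matching E "real i1" "real i2" "real j1" "real j2" boundary_points
    by (rule tight_chord_matching[OF tight])
  have "i1 = 1" "i2 = 2" "j1 = 1" "j2 = 2" "n = 2" "m = 2"
    using tight_nondegenerate[OF tight] extreme_free_cols extreme_free_rows assms by linarith+
  then have "card E = 2" using tight lower_bound by simp
  have "boundary_points = {(1, 1), (1, 2), (2, 1), (2, 2)}"
  proof
    show "boundary_points \<subseteq> {(1, 1), (1, 2), (2, 1), (2, 2)}"
    proof
      fix p assume "p \<in> boundary_points"
      then obtain i j where "p = (real i, real j)" "i \<in> {1..2}" "j \<in> {1..2}"
        using \<open>n = 2\<close> \<open>m = 2\<close> unfolding boundary_points_def grid_def by blast
      moreover have "i = 1 \<or> i = 2" "j = 1 \<or> j = 2" using calculation(2,3) by auto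
      ultimately show "p \<in> {(1, 1), (1, 2), (2, 1), (2, 2)}" by auto
    qed
    show "{(1, 1), (1, 2), (2, 1), (2, 2)} \<subseteq> boundary_points"
      using grid_point_in_boundary[of 1 1] grid_point_in_boundary[of 1 2]
        grid_point_in_boundary[of 2 1] grid_point_in_boundary[of 2 2]
        \<open>i1 = 1\<close> \<open>i2 = 2\<close> \<open>j1 = 1\<close> \<open>j2 = 2\<close> by simp
  qed
  then obtain e e' where "e \<in> E" "e' \<in> E" "e \<inter> e' = {}"
    using unit_square_disjoint_edges \<open>i1 = 1\<close> \<open>i2 = 2\<close> \<open>j1 = 1\<close> \<open>j2 = 2\<close> by auto
  then show False using edges_meet_if_card_2 \<open>card E = 2\<close> by blast
qed

lemma noncrossing_bound:
  assumes "noncrossing E"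
  shows "n + m - 1 \<le> card E"
proof (rule ccontr)
  assume "\<not> n + m - 1 \<le> card E"
  then have "card E \<le> n + m - 2" by linarith
  then show False using chord_matching.not_noncrossing[OF tight_chord_matching] assms by blast
qed

end

theorem lemma8:
  fixes n m :: nat and V :: "point set" and E :: "point set set"
  assumes "n \<ge> 1" and "m \<ge> 1"
    and "geometric_tree V E" and "covers E (grid n m)"
  shows "card E \<ge> 2 * min n m - 2
    \<and> (n \<le> 2 \<and> m \<le> 2 \<longrightarrow> card E \<ge> 2 * min n m - 1)
    \<and> (n \<noteq> m \<longrightarrow> card E \<ge> 2 * min n m - 1)
    \<and> (n = m \<and> n \<ge> 3 \<and> noncrossing E \<longrightarrow> card E \<ge> 2 * n - 1)"
proof -
  interpret grid_cover n m V E using assms(3,4) by unfold_locales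
  consider "free_cols = {}" | "free_rows = {}" | "free_cols \<noteq> {}" "free_rows \<noteq> {}" by blast
  then show ?thesis
  proof cases
    case 1
    then show ?thesis using no_free_col by (auto simp: min_def)
  next
    case 2
    then show ?thesis using no_free_row by (auto simp: min_def)
  next
    case 3
    interpret free_box n m V E using 3 by unfold_locales
    show ?thesis using lower_bound unit_square_bound noncrossing_bound by (auto simp: min_def)
  qed
qed

end
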